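(* Let $(E,\rho)$ be a weighted space and $\ell:\mathscr{B}^\rho(E)\to\mathbb{R}$ a continuous linear functional. Then $\ell$ is a smooth algebra homomorphism if and only if there exists $x\in E$ with $\ell(f)=f(x)$ for all $f\in\mathscr{B}^\rho(E)$. The point $x$ is uniquely determined by $\ell$.
   Context: A weighted space is a pair $(E,\rho)$ where $E$ is a completely regular Hausdorff topological space and $\rho:E\to(0,\infty)$ is an admissible weight function, meaning that for every $R\ge 0$ the sublevel set $K_R:=\{x\in E:\rho(x)\le R\}$ is compact. For $f:E\to\mathbb{R}$ put $\|f\|_\rho:=\sup_{x\in E}|f(x)|/\rho(x)$; $\mathscr{B}^\rho(E)$ denotes the closure of $C_b(E)$ with respect to $\|\cdot\|_\rho$ inside $\{f:E\to\mathbb{R}:\|f\|_\rho<\infty\}$. A continuous linear functional $\ell$ on $\mathscr{B}^\rho(E)$ is a smooth algebra homomorphism if for every $n$, every bounded smooth $\phi:\mathbb{R}^n\to\mathbb{R}$ and all $f_1,\dots,f_n\in\mathscr{B}^\rho(E)$ one has $\ell(\phi(f_1(\cdot),\dots,f_n(\cdot)))=\phi(\ell(f_1),\dots,\ell(f_n))$. *)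

theory Defs
  imports "HOL-Analysis.Analysis"
begin

definition weighted_space :: "'a topology \<Rightarrow> ('a \<Rightarrow> real) \<Rightarrow> bool" where
  "weighted_space X \<rho> \<longleftrightarrow>
     completely_regular_space X \<and> Hausdorff_space X \<and>
     (\<forall>x\<in>topspace X. \<rho> x > 0) \<and>
     (\<forall>R\<ge>0. compactin X {x \<in> topspace X. \<rho> x \<le> R})"

text \<open>Weighted sup norm (sup over E of |f x| / rho x; 0 is included so the
  value for empty E is 0; all the quotients are nonnegative anyway).\<close>
definition wnorm :: "'a topology \<Rightarrow> ('a \<Rightarrow> real) \<Rightarrow> ('a \<Rightarrow> real) \<Rightarrow> real" where
  "wnorm X \<rho> f = Sup (insert 0 ((\<lambda>x. \<bar>f x\<bar> / \<rho> x) ` topspace X))"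

definition wbounded :: "'a topology \<Rightarrow> ('a \<Rightarrow> real) \<Rightarrow> ('a \<Rightarrow> real) \<Rightarrow> bool" where
  "wbounded X \<rho> f \<longleftrightarrow> bounded ((\<lambda>x. \<bar>f x\<bar> / \<rho> x) ` topspace X)"

definition Cb :: "'a topology \<Rightarrow> ('a \<Rightarrow> real) set" where
  "Cb X = {g. continuous_map X euclideanreal g \<and> bounded (g ` topspace X)}"

definition Brho :: "'a topology \<Rightarrow> ('a \<Rightarrow> real) \<Rightarrow> ('a \<Rightarrow> real) set" where
  "Brho X \<rho> = {f. wbounded X \<rho> f \<and>
      (\<forall>\<epsilon>>0. \<exists>g\<in>Cb X. wbounded X \<rho> (\<lambda>x. f x - g x) \<and> wnorm X \<rho> (\<lambda>x. f x - g x) < \<epsilon>)}"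

definition cont_lin_functional ::
    "'a topology \<Rightarrow> ('a \<Rightarrow> real) \<Rightarrow> (('a \<Rightarrow> real) \<Rightarrow> real) \<Rightarrow> bool" where
  "cont_lin_functional X \<rho> L \<longleftrightarrow>
     (\<forall>f\<in>Brho X \<rho>. \<forall>g\<in>Brho X \<rho>. \<forall>a b::real.
        L (\<lambda>x. a * f x + b * g x) = a * L f + b * L g) \<and>
     (\<exists>C. \<forall>f\<in>Brho X \<rho>. \<bar>L f\<bar> \<le> C * wnorm X \<rho> f)"

text \<open>Smooth functions R^n -> R. A point of R^n is encoded as a map
  nat => real of which only the coordinates 0..n-1 matter.\<close>
definition restr :: "nat \<Rightarrow> (nat \<Rightarrow> real) \<Rightarrow> (nat \<Rightarrow> real)" where
  "restr n v = (\<lambda>i. if i < n then v i else 0)"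

definition pdiff :: "nat \<Rightarrow> ((nat \<Rightarrow> real) \<Rightarrow> real) \<Rightarrow> (nat \<Rightarrow> real) \<Rightarrow> real" where
  "pdiff i \<phi> v = deriv (\<lambda>t. \<phi> (v(i := t))) (v i)"

fun iter_pdiff :: "nat list \<Rightarrow> ((nat \<Rightarrow> real) \<Rightarrow> real) \<Rightarrow> (nat \<Rightarrow> real) \<Rightarrow> real" where
  "iter_pdiff [] \<phi> = \<phi>"
| "iter_pdiff (i # is) \<phi> = pdiff i (iter_pdiff is \<phi>)"

text \<open>C^infinity: all iterated partial derivatives exist and are continuous
  (continuity w.r.t. the product topology on nat => real, which for functions
  depending only on the first n coordinates is continuity on R^n).\<close>
definition smooth_fun :: "nat \<Rightarrow> ((nat \<Rightarrow> real) \<Rightarrow> real) \<Rightarrow> bool" where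
  "smooth_fun n \<phi> \<longleftrightarrow>
     (\<forall>v. \<phi> v = \<phi> (restr n v)) \<and>
     (\<forall>is. set is \<subseteq> {..<n} \<longrightarrow>
        continuous_on UNIV (iter_pdiff is \<phi>) \<and>
        (\<forall>i<n. \<forall>v. (\<lambda>t. iter_pdiff is \<phi> (v(i := t))) differentiable (at (v i))))"

definition smooth_alg_hom ::
    "'a topology \<Rightarrow> ('a \<Rightarrow> real) \<Rightarrow> (('a \<Rightarrow> real) \<Rightarrow> real) \<Rightarrow> bool" where
  "smooth_alg_hom X \<rho> L \<longleftrightarrow>
     (\<forall>n \<phi> fs. smooth_fun n \<phi> \<and> bounded (range \<phi>) \<and> (\<forall>i<n. fs i \<in> Brho X \<rho>) \<and>
        (\<lambda>x. \<phi> (\<lambda>i. fs i x)) \<in> Brho X \<rho> \<longrightarrow>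
        L (\<lambda>x. \<phi> (\<lambda>i. fs i x)) = \<phi> (\<lambda>i. L (fs i)))"

end

theory Submission
  imports Defs
begin

text \<open>
  A point evaluation is continuous and linear and commutes with every \<open>\<phi>\<close>; two points giving
  the same evaluation cannot be separated by a bounded continuous function, which complete
  regularity excludes.

  Conversely, let \<open>L\<close> be a smooth algebra homomorphism that is no point evaluation. As \<open>C\<^sub>b(E)\<close>
  is dense and \<open>\<rho>\<close> is bounded below, \<open>L\<close> already differs from every point evaluation on
  \<open>C\<^sub>b(E)\<close>, and composing with \<open>cos\<close> gives for each \<open>x\<close> a function \<open>u\<^sub>x\<close> with \<open>|u\<^sub>x| \<le> 1\<close>,
  \<open>L u\<^sub>x = 1\<close> and \<open>u\<^sub>x x = cos 1\<close>. Finitely many of them add up to some \<open>G\<close> with \<open>L G = M\<close>,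
  \<open>|G| \<le> M\<close> and \<open>G \<le> M - \<delta>\<close> on the compact set \<open>K\<^sub>R = {\<rho> \<le> R}\<close>. For \<open>\<theta> = b (M - G)\<close> with values
  in \<open>[0,1]\<close>, the function \<open>P = cos\<^sup>N \<theta>\<close> satisfies \<open>L P = 1\<close>: product-to-sum formulas reduce
  this to \<open>L (cos (m \<theta>)) = cos (m L \<theta>) = 1\<close>. But \<open>P\<close> is uniformly small on \<open>K\<^sub>R\<close> and bounded by 1
  elsewhere, so \<open>\<parallel>P\<parallel>\<^sub>\<rho> \<le> 1/R\<close>, contradicting the continuity of \<open>L\<close> for large \<open>R\<close>.
\<close>

section \<open>Cosine of an affine map\<close>

lemma cos_affine_combination_has_derivative:
  "((\<lambda>t. \<alpha> * cos (a * t - d) + \<beta> * sin (a * t - d)) has_real_derivative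
       (\<beta> * a) * cos (a * s - d) + (- \<alpha> * a) * sin (a * s - d)) (at s)"
  by (auto intro!: derivative_eq_intros simp: algebra_simps)

lemma iter_pdiff_cos_affine:
  assumes "set js \<subseteq> {..<1}"
  shows "\<exists>\<alpha> \<beta>. iter_pdiff js (\<lambda>v. cos (a * v 0 - d)) =
                (\<lambda>v. \<alpha> * cos (a * v 0 - d) + \<beta> * sin (a * v 0 - d))"
  using assms
proof (induction js)
  case Nil
  show ?case by (rule exI[of _ 1], rule exI[of _ 0]) simp
next
  case (Cons i js)
  then have "i = 0" by auto
  from Cons obtain \<alpha> \<beta> where IH: "iter_pdiff js (\<lambda>v. cos (a * v 0 - d)) =
      (\<lambda>v. \<alpha> * cos (a * v 0 - d) + \<beta> * sin (a * v 0 - d))" by auto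
  show ?case
    using DERIV_imp_deriv[OF cos_affine_combination_has_derivative]
    by (intro exI[of _ "\<beta> * a"] exI[of _ "- \<alpha> * a"]) (simp add: \<open>i = 0\<close> IH pdiff_def fun_eq_iff)
qed

lemma smooth_fun_cos_affine: "smooth_fun 1 (\<lambda>v. cos (a * v 0 - d))"
  unfolding smooth_fun_def
proof (intro conjI allI impI)
  show "cos (a * v 0 - d) = cos (a * restr 1 v 0 - d)" for v :: "nat \<Rightarrow> real"
    by (simp add: restr_def)
next
  fix js :: "nat list" assume "set js \<subseteq> {..<1}"
  then obtain \<alpha> \<beta> where js: "iter_pdiff js (\<lambda>v. cos (a * v 0 - d)) =
      (\<lambda>v. \<alpha> * cos (a * v 0 - d) + \<beta> * sin (a * v 0 - d))"
    using iter_pdiff_cos_affine by blast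
  show "continuous_on UNIV (iter_pdiff js (\<lambda>v. cos (a * v 0 - d)))"
    unfolding js by (intro continuous_intros) auto
  show "(\<lambda>t. iter_pdiff js (\<lambda>v. cos (a * v 0 - d)) (v(i := t))) differentiable at (v i)"
    if "i < 1" for i and v :: "nat \<Rightarrow> real"
    using that cos_affine_combination_has_derivative[of \<alpha> a d \<beta> "v 0"]
    unfolding js real_differentiable_def by auto
qed

lemma cos_mult_cos_multiple:
  fixes t m :: real
  shows "cos t * cos (m * t) = cos ((m + 1) * t) / 2 + cos ((m - 1) * t) / 2"
proof -
  have "cos ((m + 1) * t) = cos (m * t + t)" "cos ((m - 1) * t) = cos (m * t - t)"
    by (simp_all add: algebra_simps)
  then show ?thesis by (simp add: cos_add cos_diff field_simps)
qed

section \<open>Weighted norm and bounded continuous functions\<close>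

lemma wbounded_iff: "wbounded X \<rho> f \<longleftrightarrow> (\<exists>B. \<forall>x\<in>topspace X. \<bar>\<bar>f x\<bar> / \<rho> x\<bar> \<le> B)"
  unfolding wbounded_def bounded_real by auto

lemma wboundedI:
  assumes "\<And>x. x \<in> topspace X \<Longrightarrow> \<rho> x > 0" "\<And>x. x \<in> topspace X \<Longrightarrow> \<bar>f x\<bar> / \<rho> x \<le> B"
  shows "wbounded X \<rho> f"
  unfolding wbounded_iff using assms by (intro exI[of _ B] ballI) (simp add: abs_of_pos)

lemma wboundedE:
  assumes "wbounded X \<rho> f"
  obtains B where "\<And>x. x \<in> topspace X \<Longrightarrow> \<bar>f x\<bar> / \<rho> x \<le> B"
  using assms unfolding wbounded_iff by (meson abs_ge_self order_trans)

lemma wnorm_le: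
  assumes "\<And>x. x \<in> topspace X \<Longrightarrow> \<bar>f x\<bar> / \<rho> x \<le> M" "0 \<le> M"
  shows "wnorm X \<rho> f \<le> M"
  unfolding wnorm_def using assms by (intro cSup_least) auto

lemma wnorm_ge:
  assumes "wbounded X \<rho> f" "x \<in> topspace X"
  shows "\<bar>f x\<bar> / \<rho> x \<le> wnorm X \<rho> f"
  using assms unfolding wnorm_def wbounded_def
  by (intro cSup_upper bdd_above_insert[THEN iffD2] bounded_imp_bdd_above) auto

lemma wnorm_nonneg:
  assumes "wbounded X \<rho> f"
  shows "0 \<le> wnorm X \<rho> f"
  using assms unfolding wnorm_def wbounded_def
  by (intro cSup_upper bdd_above_insert[THEN iffD2] bounded_imp_bdd_above) auto

lemma Cb_iff: "g \<in> Cb X \<longleftrightarrow> continuous_map X euclideanreal g \<and> (\<exists>B. \<forall>x\<in>topspace X. \<bar>g x\<bar> \<le> B)"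
  unfolding Cb_def bounded_real by auto

lemma Cb_linear_combination:
  assumes "f \<in> Cb X" "g \<in> Cb X"
  shows "(\<lambda>x. a * f x + b * g x) \<in> Cb X"
proof -
  obtain B1 B2 where B: "\<forall>x\<in>topspace X. \<bar>f x\<bar> \<le> B1" "\<forall>x\<in>topspace X. \<bar>g x\<bar> \<le> B2"
    using assms unfolding Cb_iff by metis
  have "\<bar>a * f x + b * g x\<bar> \<le> \<bar>a\<bar> * B1 + \<bar>b\<bar> * B2" if "x \<in> topspace X" for x
  proof -
    have "\<bar>a * f x + b * g x\<bar> \<le> \<bar>a\<bar> * \<bar>f x\<bar> + \<bar>b\<bar> * \<bar>g x\<bar>"
      by (metis abs_mult abs_triangle_ineq)
    also have "\<dots> \<le> \<bar>a\<bar> * B1 + \<bar>b\<bar> * B2"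
      using B that by (intro add_mono mult_left_mono) auto
    finally show ?thesis .
  qed
  moreover have "continuous_map X euclideanreal (\<lambda>x. a * f x + b * g x)"
    using assms unfolding Cb_iff by (intro continuous_intros) auto
  ultimately show ?thesis unfolding Cb_iff by blast
qed

lemma Cb_sum:
  assumes "finite F" "\<And>i. i \<in> F \<Longrightarrow> h i \<in> Cb X"
  shows "(\<lambda>x. \<Sum>i\<in>F. h i x) \<in> Cb X"
  using assms
proof (induction F rule: finite_induct)
  case empty
  then show ?case unfolding Cb_iff by auto
next
  case (insert i F)
  then show ?case using Cb_linear_combination[of "h i" X "\<lambda>x. \<Sum>i\<in>F. h i x" 1 1] by simp
qed

lemma Cb_compose:
  assumes "g \<in> Cb X" "continuous_on UNIV h" "\<And>t. \<bar>h t\<bar> \<le> B"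
  shows "(\<lambda>x. h (g x)) \<in> Cb X"
proof -
  have "continuous_map X euclideanreal (h \<circ> g)"
    using assms(1,2) unfolding Cb_iff by (intro continuous_map_compose) auto
  then show ?thesis unfolding Cb_iff o_def using assms(3) by blast
qed

lemma Cb_cos_power_mult_cos:
  assumes "g \<in> Cb X"
  shows "(\<lambda>y. cos (a * g y - d) ^ k * cos (m * (a * g y - d))) \<in> Cb X"
proof (rule Cb_compose[OF assms])
  show "continuous_on UNIV (\<lambda>t. cos (a * t - d) ^ k * cos (m * (a * t - d)))"
    by (intro continuous_intros)
  show "\<bar>cos (a * t - d) ^ k * cos (m * (a * t - d))\<bar> \<le> 1" for t
    unfolding abs_mult power_abs by (intro mult_le_one power_le_one) auto
qed

lemma Cb_cos_affine:
  assumes "g \<in> Cb X"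
  shows "(\<lambda>y. cos (a * g y - d)) \<in> Cb X"
  using Cb_cos_power_mult_cos[OF assms, of a d 0 1] by simp

lemma weight_pos: "weighted_space X \<rho> \<Longrightarrow> x \<in> topspace X \<Longrightarrow> \<rho> x > 0"
  unfolding weighted_space_def by blast

lemma weight_bounded_below:
  assumes "weighted_space X \<rho>"
  obtains r where "r > 0" "\<And>x. x \<in> topspace X \<Longrightarrow> r \<le> \<rho> x"
proof -
  \<comment> \<open>\<open>\<rho>\<close> need not be continuous, but its sublevel sets are compact, hence closed,
    and they decrease to the empty set.\<close>
  define C where "C n = {x \<in> topspace X. \<rho> x \<le> 1 / Suc n}" for n
  have compact: "compactin X (C n)" for n
    using assms unfolding weighted_space_def C_def by simp
  then have closed: "closedin X (C n)" for n
    using assms compactin_imp_closedin unfolding weighted_space_def by blast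
  have dec: "decseq C"
  proof (intro decseq_SucI subsetI)
    fix n x assume "x \<in> C (Suc n)"
    moreover have "1 / real (Suc (Suc n)) \<le> 1 / Suc n" by (simp add: frac_le)
    ultimately show "x \<in> C n" unfolding C_def by auto
  qed
  have empty: "(\<Inter>n. C n) = {}"
  proof -
    have False if x: "x \<in> topspace X" and le: "\<And>n. \<rho> x \<le> 1 / Suc n" for x
    proof -
      obtain n where "inverse (real (Suc n)) < \<rho> x"
        using reals_Archimedean weight_pos[OF assms x] by blast
      then show False using le[of n] by (simp add: inverse_eq_divide)
    qed
    then show ?thesis unfolding C_def by blast
  qed
  have "\<exists>n. C n = {}"
  proof (rule ccontr)
    assume "\<nexists>n. C n = {}"
    have "compact_space (subtopology X (C 0))"
      using compact by (rule compact_space_subtopology)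
    moreover have "closedin (subtopology X (C 0)) (C n)" for n
      using closed dec by (intro closedin_subset_topspace) (auto simp: decseq_def)
    ultimately have "(\<Inter>n. C n) \<noteq> {}"
      using compact_space_imp_nest dec \<open>\<nexists>n. C n = {}\<close> by blast
    with empty show False by blast
  qed
  then obtain n where "C n = {}" ..
  show ?thesis
  proof
    show "0 < 1 / real (Suc n)" by simp
    show "1 / real (Suc n) \<le> \<rho> x" if "x \<in> topspace X" for x
      using \<open>C n = {}\<close> that unfolding C_def by fastforce
  qed
qed

lemma Cb_subset_Brho:
  assumes "weighted_space X \<rho>"
  shows "Cb X \<subseteq> Brho X \<rho>"
proof
  fix g assume g: "g \<in> Cb X"
  obtain r where r: "r > 0" "\<And>x. x \<in> topspace X \<Longrightarrow> r \<le> \<rho> x"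
    using weight_bounded_below[OF assms] by blast
  obtain B where B: "\<forall>x\<in>topspace X. \<bar>g x\<bar> \<le> B"
    using g unfolding Cb_iff by blast
  note pos = weight_pos[OF assms]
  have "wbounded X \<rho> g"
  proof (rule wboundedI[OF pos])
    fix x assume x: "x \<in> topspace X"
    have "\<bar>g x\<bar> / \<rho> x \<le> \<bar>g x\<bar> / r"
      using r pos[OF x] x by (intro divide_left_mono) auto
    also have "\<dots> \<le> B / r"
      using B x r by (intro divide_right_mono) auto
    finally show "\<bar>g x\<bar> / \<rho> x \<le> B / r" .
  qed
  moreover have "wbounded X \<rho> (\<lambda>x. g x - g x)"
    by (rule wboundedI[OF pos, where B=0]) auto
  moreover have "wnorm X \<rho> (\<lambda>x. g x - g x) \<le> 0"
    by (rule wnorm_le) auto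
  ultimately show "g \<in> Brho X \<rho>"
    unfolding Brho_def using g by force
qed

lemma Brho_diff_Cb:
  assumes "weighted_space X \<rho>" "f \<in> Brho X \<rho>" "g \<in> Cb X"
  shows "(\<lambda>x. f x - g x) \<in> Brho X \<rho>"
proof -
  obtain B1 where B1: "\<And>x. x \<in> topspace X \<Longrightarrow> \<bar>f x\<bar> / \<rho> x \<le> B1"
    using assms(2) wboundedE unfolding Brho_def by blast
  obtain B2 where B2: "\<And>x. x \<in> topspace X \<Longrightarrow> \<bar>g x\<bar> / \<rho> x \<le> B2"
    using assms(3) Cb_subset_Brho[OF assms(1)] wboundedE unfolding Brho_def by blast
  note pos = weight_pos[OF assms(1)]
  have "wbounded X \<rho> (\<lambda>x. f x - g x)"
  proof (rule wboundedI[OF pos])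
    fix x assume x: "x \<in> topspace X"
    have "\<bar>f x - g x\<bar> / \<rho> x \<le> \<bar>f x\<bar> / \<rho> x + \<bar>g x\<bar> / \<rho> x"
      using pos[OF x] by (simp add: add_divide_distrib[symmetric] divide_right_mono)
    also have "\<dots> \<le> B1 + B2"
      using B1 B2 x by (intro add_mono)
    finally show "\<bar>f x - g x\<bar> / \<rho> x \<le> B1 + B2" .
  qed
  moreover have "\<exists>h\<in>Cb X. wbounded X \<rho> (\<lambda>x. (f x - g x) - h x) \<and>
                   wnorm X \<rho> (\<lambda>x. (f x - g x) - h x) < \<epsilon>" if \<epsilon>: "\<epsilon> > 0" for \<epsilon>
  proof -
    obtain g' where g': "g' \<in> Cb X" "wbounded X \<rho> (\<lambda>x. f x - g' x)" "wnorm X \<rho> (\<lambda>x. f x - g' x) < \<epsilon>"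
      using assms(2) \<epsilon> unfolding Brho_def by blast
    moreover have "(\<lambda>x. g' x - g x) \<in> Cb X"
      using Cb_linear_combination[OF g'(1) assms(3), of 1 "-1"] by simp
    ultimately show ?thesis
      by (intro bexI[of _ "\<lambda>x. g' x - g x"]) auto
  qed
  ultimately show ?thesis unfolding Brho_def by blast
qed

lemma cont_lin_functional_linear:
  assumes "cont_lin_functional X \<rho> L" "f \<in> Brho X \<rho>" "g \<in> Brho X \<rho>"
  shows "L (\<lambda>x. a * f x + b * g x) = a * L f + b * L g"
  using assms unfolding cont_lin_functional_def by blast

lemma cont_lin_functional_diff:
  assumes "cont_lin_functional X \<rho> L" "f \<in> Brho X \<rho>" "g \<in> Brho X \<rho>"
  shows "L (\<lambda>x. f x - g x) = L f - L g"
  using cont_lin_functional_linear[OF assms, of 1 "-1"] by simp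

lemma cont_lin_functional_bound:
  assumes "cont_lin_functional X \<rho> L"
  obtains C where "C \<ge> 0" "\<And>f. f \<in> Brho X \<rho> \<Longrightarrow> \<bar>L f\<bar> \<le> C * wnorm X \<rho> f"
proof -
  obtain C where C: "\<forall>f\<in>Brho X \<rho>. \<bar>L f\<bar> \<le> C * wnorm X \<rho> f"
    using assms unfolding cont_lin_functional_def by blast
  show ?thesis
  proof (rule that[of "\<bar>C\<bar>"])
    fix f assume f: "f \<in> Brho X \<rho>"
    then have "0 \<le> wnorm X \<rho> f"
      using wnorm_nonneg unfolding Brho_def by blast
    then show "\<bar>L f\<bar> \<le> \<bar>C\<bar> * wnorm X \<rho> f"
      using C f by (meson abs_ge_self mult_right_mono order_trans)
  qed simp
qed

lemma cont_lin_functional_sum_Cb: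
  assumes "weighted_space X \<rho>" "cont_lin_functional X \<rho> L"
    and "finite F" "\<And>i. i \<in> F \<Longrightarrow> h i \<in> Cb X"
  shows "L (\<lambda>x. \<Sum>i\<in>F. h i x) = (\<Sum>i\<in>F. L (h i))"
  using assms(3,4)
proof (induction F rule: finite_induct)
  case empty
  have "(\<lambda>x. 0) \<in> Cb X"
    unfolding Cb_iff by auto
  then have "(\<lambda>x. 0) \<in> Brho X \<rho>"
    using Cb_subset_Brho[OF assms(1)] by blast
  then show ?case
    using cont_lin_functional_linear[OF assms(2), of "\<lambda>x. 0" "\<lambda>x. 0" 0 0] by simp
next
  case (insert i F)
  have "(\<lambda>x. \<Sum>i\<in>F. h i x) \<in> Cb X"
    using insert.prems by (intro Cb_sum[OF insert.hyps(1)]) auto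
  then have "h i \<in> Brho X \<rho>" "(\<lambda>x. \<Sum>i\<in>F. h i x) \<in> Brho X \<rho>"
    using insert.prems Cb_subset_Brho[OF assms(1)] by auto
  then show ?case
    using cont_lin_functional_linear[OF assms(2), of "h i" "\<lambda>x. \<Sum>i\<in>F. h i x" 1 1] insert by simp
qed

section \<open>Point evaluations\<close>

lemma Cb_separates_points:
  assumes "completely_regular_space X" "t1_space X"
    and "x \<in> topspace X" "y \<in> topspace X" "x \<noteq> y"
  obtains g where "g \<in> Cb X" "g x \<noteq> g y"
proof -
  have "closedin X {y}"
    using closedin_t1_singleton assms(2,4) .
  then obtain g :: "'a \<Rightarrow> real" where g: "continuous_map X (top_of_set {0..1}) g" "g x = 0" "g ` {y} \<subseteq> {1}"
    using assms(1,3,5) unfolding completely_regular_space_def by (metis Diff_iff singletonD)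
  have "g \<in> Cb X"
    using g(1) unfolding Cb_iff continuous_map_in_subtopology by (intro conjI exI[of _ 1]) (auto simp: Pi_iff)
  then show ?thesis
    using g by (intro that) auto
qed

lemma point_evaluation_on_Cb_extends:
  assumes "weighted_space X \<rho>" "cont_lin_functional X \<rho> L" "x \<in> topspace X"
    and eval: "\<forall>g\<in>Cb X. L g = g x" and f: "f \<in> Brho X \<rho>"
  shows "L f = f x"
proof -
  obtain C where C: "C \<ge> 0" "\<And>f. f \<in> Brho X \<rho> \<Longrightarrow> \<bar>L f\<bar> \<le> C * wnorm X \<rho> f"
    using cont_lin_functional_bound[OF assms(2)] by blast
  have \<rho>x: "\<rho> x > 0"
    using weight_pos[OF assms(1,3)] .
  have "\<bar>L f - f x\<bar> \<le> 0 + e" if "e > 0" for e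
  proof -
    define \<eta> where "\<eta> = e / (C + \<rho> x)"
    have "\<eta> > 0"
      unfolding \<eta>_def using that C(1) \<rho>x by simp
    then obtain g where g: "g \<in> Cb X" "wbounded X \<rho> (\<lambda>y. f y - g y)"
        "wnorm X \<rho> (\<lambda>y. f y - g y) < \<eta>"
      using f unfolding Brho_def by blast
    let ?w = "wnorm X \<rho> (\<lambda>y. f y - g y)"
    have "L f - f x = L (\<lambda>y. f y - g y) - (f x - g x)"
      using cont_lin_functional_diff[OF assms(2) f, of g] Cb_subset_Brho[OF assms(1)] eval g(1)
      by auto
    then have "\<bar>L f - f x\<bar> \<le> \<bar>L (\<lambda>y. f y - g y)\<bar> + \<bar>f x - g x\<bar>"
      by linarith
    also have "\<dots> \<le> C * ?w + \<rho> x * ?w"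
      using C(2)[OF Brho_diff_Cb[OF assms(1) f g(1)]] wnorm_ge[OF g(2) assms(3)] \<rho>x
      by (simp add: divide_le_eq mult.commute)
    also have "\<dots> \<le> (C + \<rho> x) * \<eta>"
      using g(3) C(1) \<rho>x by (simp add: distrib_right[symmetric])
    also have "\<dots> = e"
      unfolding \<eta>_def using C(1) \<rho>x by simp
    finally show ?thesis by simp
  qed
  then have "\<bar>L f - f x\<bar> \<le> 0"
    by (rule field_le_epsilon)
  then show ?thesis by simp
qed

lemma point_evaluation_unique:
  assumes "weighted_space X \<rho>" "x \<in> topspace X" "y \<in> topspace X"
    and "\<forall>f\<in>Brho X \<rho>. L f = f x" "\<forall>f\<in>Brho X \<rho>. L f = f y"
  shows "x = y"
proof (rule ccontr)
  assume "x \<noteq> y"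
  moreover have "completely_regular_space X" "t1_space X"
    using assms(1) Hausdorff_imp_t1_space unfolding weighted_space_def by auto
  ultimately obtain g where "g \<in> Cb X" "g x \<noteq> g y"
    using Cb_separates_points assms(2,3) by metis
  then show False
    using assms(4,5) Cb_subset_Brho[OF assms(1)] by (metis subsetD)
qed

lemma point_evaluation_imp_smooth_alg_hom:
  assumes "\<forall>f\<in>Brho X \<rho>. L f = f x"
  shows "smooth_alg_hom X \<rho> L"
  unfolding smooth_alg_hom_def
proof (intro allI impI)
  fix n \<phi> and fs :: "nat \<Rightarrow> 'a \<Rightarrow> real"
  assume hyps: "smooth_fun n \<phi> \<and> bounded (range \<phi>) \<and> (\<forall>i<n. fs i \<in> Brho X \<rho>) \<and>
    (\<lambda>x. \<phi> (\<lambda>i. fs i x)) \<in> Brho X \<rho>"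
  then have "restr n (\<lambda>i. fs i x) = restr n (\<lambda>i. L (fs i))"
    using assms unfolding restr_def by auto
  then have "\<phi> (\<lambda>i. fs i x) = \<phi> (\<lambda>i. L (fs i))"
    using hyps unfolding smooth_fun_def by metis
  then show "L (\<lambda>x. \<phi> (\<lambda>i. fs i x)) = \<phi> (\<lambda>i. L (fs i))"
    using hyps assms by simp
qed

section \<open>Smooth algebra homomorphisms are point evaluations\<close>

lemma smooth_alg_hom_cos_affine:
  assumes "weighted_space X \<rho>" "smooth_alg_hom X \<rho> L" "g \<in> Cb X"
  shows "L (\<lambda>y. cos (a * g y - d)) = cos (a * L g - d)"
proof -
  have "bounded (range (\<lambda>v::nat \<Rightarrow> real. cos (a * v 0 - d)))"
    unfolding bounded_real by (intro exI[of _ 1]) auto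
  moreover have "g \<in> Brho X \<rho>" "(\<lambda>y. cos (a * g y - d)) \<in> Brho X \<rho>"
    using Cb_subset_Brho[OF assms(1)] assms(3) Cb_cos_affine[OF assms(3)] by auto
  ultimately show ?thesis
    using assms(2) smooth_fun_cos_affine[of a d]
    unfolding smooth_alg_hom_def
    by (auto dest!: spec[of _ 1] spec[of _ "\<lambda>v. cos (a * v 0 - d)"] spec[of _ "\<lambda>i. g"])
qed

lemma smooth_alg_hom_peak_function:
  assumes "weighted_space X \<rho>" "smooth_alg_hom X \<rho> L" "g \<in> Cb X" "L g \<noteq> g x"
  obtains u where "u \<in> Cb X" "L u = 1" "u x = cos 1" "\<And>y. \<bar>u y\<bar> \<le> 1"
proof
  define a where "a = 1 / (g x - L g)"
  show "(\<lambda>y. cos (a * g y - a * L g)) \<in> Cb X"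
    using Cb_cos_affine[OF assms(3)] .
  show "L (\<lambda>y. cos (a * g y - a * L g)) = 1"
    using smooth_alg_hom_cos_affine[OF assms(1-3)] by simp
  have "a * g x - a * L g = 1"
    unfolding a_def using assms(4) by (simp add: diff_divide_distrib[symmetric])
  then show "cos (a * g x - a * L g) = cos 1" by simp
qed simp

lemma smooth_alg_hom_cos_power:
  assumes "weighted_space X \<rho>" "cont_lin_functional X \<rho> L" "smooth_alg_hom X \<rho> L"
    and g: "g \<in> Cb X" and zero: "a * L g - d = 0"
  shows "L (\<lambda>y. cos (a * g y - d) ^ k * cos (m * (a * g y - d))) = 1"
proof (induction k arbitrary: m)
  case 0
  have "\<And>t. (m * a) * t - m * d = m * (a * t - d)"
    by (simp add: algebra_simps)
  then have "L (\<lambda>y. cos (m * (a * g y - d))) = cos (m * (a * L g - d))"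
    using smooth_alg_hom_cos_affine[OF assms(1,3) g, of "m * a" "m * d"] by simp
  then show ?case
    using zero by simp
next
  case (Suc k)
  let ?\<theta> = "\<lambda>y. a * g y - d"
  let ?f = "\<lambda>m y. cos (?\<theta> y) ^ k * cos (m * ?\<theta> y)"
  have "cos (?\<theta> y) ^ Suc k * cos (m * ?\<theta> y) = 1/2 * ?f (m + 1) y + 1/2 * ?f (m - 1) y" for y
  proof -
    have "cos (?\<theta> y) ^ Suc k * cos (m * ?\<theta> y) = cos (?\<theta> y) ^ k * (cos (?\<theta> y) * cos (m * ?\<theta> y))"
      by (simp add: mult_ac)
    also have "\<dots> = 1/2 * ?f (m + 1) y + 1/2 * ?f (m - 1) y"
      by (simp only: cos_mult_cos_multiple) (simp add: field_simps)
    finally show ?thesis .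
  qed
  moreover have "?f m' \<in> Brho X \<rho>" for m'
    using Cb_subset_Brho[OF assms(1)] Cb_cos_power_mult_cos[OF g] by blast
  ultimately show ?case
    using cont_lin_functional_linear[OF assms(2), of "?f (m + 1)" "?f (m - 1)" "1/2" "1/2"]
      Suc.IH[of "m + 1"] Suc.IH[of "m - 1"] by simp
qed

lemma compact_sum_of_peak_functions:
  assumes "weighted_space X \<rho>" "cont_lin_functional X \<rho> L" "compactin X K" "c < 1"
    and peak: "\<And>x. x \<in> topspace X \<Longrightarrow> \<exists>u\<in>Cb X. L u = 1 \<and> u x \<le> c \<and> (\<forall>y. \<bar>u y\<bar> \<le> 1)"
  obtains G M where "G \<in> Cb X" "L G = M" "\<And>y. \<bar>G y\<bar> \<le> M" "\<And>y. y \<in> K \<Longrightarrow> G y \<le> M - (1 - c) / 2"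
proof -
  obtain u where u: "\<And>x. x \<in> topspace X \<Longrightarrow> u x \<in> Cb X \<and> L (u x) = 1 \<and> u x x \<le> c \<and> (\<forall>y. \<bar>u x y\<bar> \<le> 1)"
    using peak by metis
  define \<kappa> where "\<kappa> = (1 + c) / 2"
  define W where "W x = {y \<in> topspace X. u x y \<in> {..<\<kappa>}}" for x
  have "openin X (W x)" if "x \<in> topspace X" for x
    unfolding W_def using u[OF that] unfolding Cb_iff
    by (intro openin_continuous_map_preimage) auto
  moreover have "K \<subseteq> \<Union>(W ` topspace X)"
  proof
    fix y assume "y \<in> K"
    then have "y \<in> topspace X"
      using assms(3) compactin_subset_topspace by blast
    moreover have "u y y < \<kappa>"
      using u[OF \<open>y \<in> topspace X\<close>] assms(4) unfolding \<kappa>_def by auto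
    ultimately show "y \<in> \<Union>(W ` topspace X)"
      unfolding W_def by blast
  qed
  ultimately obtain \<F> where "finite \<F>" "\<F> \<subseteq> W ` topspace X" "K \<subseteq> \<Union>\<F>"
    using compactinD[OF assms(3), of "W ` topspace X"] by blast
  then obtain F where F: "F \<subseteq> topspace X" "finite F" "K \<subseteq> \<Union>(W ` F)"
    by (metis finite_subset_image)
  define G where "G = (\<lambda>y. \<Sum>x\<in>F. u x y)"
  show ?thesis
  proof (rule that[of G "real (card F)"])
    show "G \<in> Cb X"
      unfolding G_def using u F(1) by (intro Cb_sum[OF F(2)]) auto
    have "L G = (\<Sum>x\<in>F. L (u x))"
      unfolding G_def using u F(1) by (intro cont_lin_functional_sum_Cb[OF assms(1,2) F(2)]) auto
    also have "\<dots> = (\<Sum>x\<in>F. 1)"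
      using u F(1) by (intro sum.cong) auto
    also have "\<dots> = real (card F)"
      by simp
    finally show "L G = real (card F)" .
    show "\<bar>G y\<bar> \<le> real (card F)" for y
    proof -
      have "\<bar>G y\<bar> \<le> (\<Sum>x\<in>F. \<bar>u x y\<bar>)"
        unfolding G_def by (rule sum_abs)
      also have "\<dots> \<le> (\<Sum>x\<in>F. 1)"
        using u F(1) by (intro sum_mono) auto
      finally show ?thesis by simp
    qed
    show "G y \<le> real (card F) - (1 - c) / 2" if "y \<in> K" for y
    proof -
      obtain x0 where x0: "x0 \<in> F" "y \<in> W x0"
        using F(3) \<open>y \<in> K\<close> by blast
      have "G y = u x0 y + (\<Sum>x\<in>F - {x0}. u x y)"
        unfolding G_def using F(2) x0(1) by (simp add: sum.remove)
      also have "\<dots> \<le> \<kappa> + (\<Sum>x\<in>F - {x0}. 1)"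
      proof (intro add_mono sum_mono)
        show "u x0 y \<le> \<kappa>"
          using x0(2) unfolding W_def by simp
        show "u x y \<le> 1" if "x \<in> F - {x0}" for x
          using u[of x] that F(1) abs_le_iff by blast
      qed
      also have "\<dots> = real (card F) - (1 - c) / 2"
      proof -
        have "card F \<ge> 1"
          using F(2) x0(1) card_gt_0_iff by (metis One_nat_def Suc_leI empty_iff)
        then show ?thesis
          using F(2) x0(1) unfolding \<kappa>_def by (simp add: of_nat_diff field_simps)
      qed
      finally show ?thesis .
    qed
  qed
qed

lemma smooth_alg_hom_concentrated_function:
  assumes "weighted_space X \<rho>" "cont_lin_functional X \<rho> L" "smooth_alg_hom X \<rho> L"
    and G: "G \<in> Cb X" "L G = M" "\<And>y. \<bar>G y\<bar> \<le> M" "\<And>y. y \<in> K \<Longrightarrow> G y \<le> M - \<delta>"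
    and "\<delta> > 0" "\<epsilon> > 0"
  obtains P where "P \<in> Cb X" "L P = 1" "\<And>y. \<bar>P y\<bar> \<le> 1" "\<And>y. y \<in> K \<Longrightarrow> \<bar>P y\<bar> \<le> \<epsilon>"
proof -
  have "M \<ge> 0"
    using G(3)[of undefined] by linarith
  define b where "b = 1 / (2 * M + 2)"
  have "b > 0" "2 * b * M \<le> 1" "b \<le> 1/2"
    unfolding b_def using \<open>M \<ge> 0\<close> by (simp_all add: field_simps)
  \<comment> \<open>written in the affine form expected by \<open>smooth_alg_hom_cos_power\<close>\<close>
  define \<theta> where "\<theta> y = - b * G y - - b * M" for y
  have \<theta>_eq: "\<theta> y = b * (M - G y)" for y
    unfolding \<theta>_def by (simp add: algebra_simps)
  have \<theta>_range: "0 \<le> \<theta> y" "\<theta> y \<le> 1" for y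
  proof -
    show "0 \<le> \<theta> y"
      unfolding \<theta>_eq using \<open>b > 0\<close> G(3)[of y] by simp
    have "b * (M - G y) \<le> b * (2 * M)"
      using \<open>b > 0\<close> G(3)[of y] by (intro mult_left_mono) auto
    then show "\<theta> y \<le> 1"
      unfolding \<theta>_eq using \<open>2 * b * M \<le> 1\<close> by simp
  qed
  define t0 where "t0 = b * min \<delta> 1"
  have "0 < t0" "t0 \<le> 1"
    unfolding t0_def using \<open>b > 0\<close> \<open>b \<le> 1/2\<close> \<open>\<delta> > 0\<close>
    by (auto intro: order_trans[OF mult_mono[of b "1/2" "min \<delta> 1" 1]])
  have \<theta>_K: "t0 \<le> \<theta> y" if "y \<in> K" for y
    unfolding t0_def \<theta>_eq using G(4)[OF that] \<open>b > 0\<close> by (intro mult_left_mono) auto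
  define q where "q = cos t0"
  have "0 \<le> q"
    unfolding q_def using \<open>0 < t0\<close> \<open>t0 \<le> 1\<close> pi_gt3 by (intro cos_ge_zero) auto
  moreover have "q < 1"
    unfolding q_def using \<open>0 < t0\<close> \<open>t0 \<le> 1\<close> pi_gt3 cos_monotone_0_pi[of 0 t0] by simp
  ultimately have "(\<lambda>n. q ^ n) \<longlonglongrightarrow> 0"
    by (intro LIMSEQ_power_zero) simp
  from order_tendstoD(2)[OF this \<open>\<epsilon> > 0\<close>] obtain N where N: "q ^ N < \<epsilon>"
    by (auto simp: eventually_sequentially)
  define P where "P y = cos (\<theta> y) ^ N" for y
  have cos_\<theta>: "0 \<le> cos (\<theta> y)" for y
    using \<theta>_range[of y] pi_gt3 by (intro cos_ge_zero) auto
  show ?thesis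
  proof
    show "P \<in> Cb X"
      using Cb_cos_power_mult_cos[OF G(1), of "- b" "- b * M" N 0] unfolding P_def \<theta>_def by simp
    show "L P = 1"
      using smooth_alg_hom_cos_power[OF assms(1-3) G(1), of "- b" "- b * M" N 0] G(2)
      unfolding P_def \<theta>_def by simp
    show "\<bar>P y\<bar> \<le> 1" for y
      unfolding P_def by (simp add: power_abs power_le_one)
    show "\<bar>P y\<bar> \<le> \<epsilon>" if "y \<in> K" for y
    proof -
      have "cos (\<theta> y) \<le> q"
        unfolding q_def using \<theta>_K[OF that] \<theta>_range[of y] \<open>0 < t0\<close> pi_gt3
        by (intro cos_monotone_0_pi_le) auto
      then have "cos (\<theta> y) ^ N \<le> q ^ N"
        using cos_\<theta> by (intro power_mono)
      then show ?thesis
        unfolding P_def using cos_\<theta>[of y] N by simp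
    qed
  qed
qed

lemma smooth_alg_hom_imp_point_evaluation:
  assumes "weighted_space X \<rho>" "cont_lin_functional X \<rho> L" "smooth_alg_hom X \<rho> L"
  shows "\<exists>x\<in>topspace X. \<forall>f\<in>Brho X \<rho>. L f = f x"
proof (rule ccontr)
  assume no_eval: "\<not> ?thesis"
  have not_eval: "\<exists>g\<in>Cb X. L g \<noteq> g x" if "x \<in> topspace X" for x
  proof (rule ccontr)
    assume "\<not> (\<exists>g\<in>Cb X. L g \<noteq> g x)"
    then have "\<forall>f\<in>Brho X \<rho>. L f = f x"
      using point_evaluation_on_Cb_extends[OF assms(1,2) that] by blast
    with no_eval that show False by blast
  qed
  have peak: "\<exists>u\<in>Cb X. L u = 1 \<and> u x \<le> cos 1 \<and> (\<forall>y. \<bar>u y\<bar> \<le> 1)"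
    if x: "x \<in> topspace X" for x
  proof -
    obtain g where "g \<in> Cb X" "L g \<noteq> g x"
      using not_eval[OF x] by blast
    then obtain u where "u \<in> Cb X" "L u = 1" "u x = cos 1" "\<And>y. \<bar>u y\<bar> \<le> 1"
      using smooth_alg_hom_peak_function[OF assms(1,3)] by blast
    then show ?thesis by auto
  qed
  obtain C where C: "C \<ge> 0" "\<And>f. f \<in> Brho X \<rho> \<Longrightarrow> \<bar>L f\<bar> \<le> C * wnorm X \<rho> f"
    using cont_lin_functional_bound[OF assms(2)] by blast
  obtain r where r: "r > 0" "\<And>x. x \<in> topspace X \<Longrightarrow> r \<le> \<rho> x"
    using weight_bounded_below[OF assms(1)] by blast
  define R where "R = 2 * C + 1"
  have "R > 0"
    unfolding R_def using C(1) by simp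
  define K where "K = {x \<in> topspace X. \<rho> x \<le> R}"
  have K: "compactin X K"
    using assms(1) \<open>R > 0\<close> unfolding weighted_space_def K_def by simp
  have cos1: "cos 1 < (1::real)"
    using cos_monotone_0_pi[of 0 1] pi_gt3 by simp
  obtain G M where G: "G \<in> Cb X" "L G = M" "\<And>y. \<bar>G y\<bar> \<le> M"
      "\<And>y. y \<in> K \<Longrightarrow> G y \<le> M - (1 - cos 1) / 2"
    using compact_sum_of_peak_functions[OF assms(1,2) K cos1 peak] by blast
  have "(1 - cos 1) / 2 > (0::real)" "r / R > 0"
    using cos1 \<open>r > 0\<close> \<open>R > 0\<close> by simp_all
  then obtain P where P: "P \<in> Cb X" "L P = 1" "\<And>y. \<bar>P y\<bar> \<le> 1" "\<And>y. y \<in> K \<Longrightarrow> \<bar>P y\<bar> \<le> r / R"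
    using smooth_alg_hom_concentrated_function[where K = K, OF assms G] by blast
  have "wnorm X \<rho> P \<le> 1 / R"
  proof (rule wnorm_le)
    fix y assume y: "y \<in> topspace X"
    show "\<bar>P y\<bar> / \<rho> y \<le> 1 / R"
    proof (cases "\<rho> y \<le> R")
      case True
      then have "\<bar>P y\<bar> / \<rho> y \<le> (r / R) / r"
        using P(4) r y \<open>R > 0\<close> unfolding K_def by (intro frac_le) auto
      then show ?thesis
        using \<open>r > 0\<close> by simp
    next
      case False
      then show ?thesis
        using P(3)[of y] \<open>R > 0\<close> by (intro frac_le) auto
    qed
  qed (use \<open>R > 0\<close> in simp)
  have "P \<in> Brho X \<rho>"
    using P(1) Cb_subset_Brho[OF assms(1)] by blast
  then have "1 \<le> C * wnorm X \<rho> P"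
    using C(2) P(2) by fastforce
  also have "\<dots> \<le> C * (1 / R)"
    using \<open>wnorm X \<rho> P \<le> 1 / R\<close> C(1) by (rule mult_left_mono)
  finally show False
    unfolding R_def using C(1) by (simp add: field_simps)
qed

theorem mainTheorem13:
  fixes X :: "'a topology" and \<rho> :: "'a \<Rightarrow> real" and L :: "('a \<Rightarrow> real) \<Rightarrow> real"
  assumes "weighted_space X \<rho>"
    and "cont_lin_functional X \<rho> L"
  shows "(smooth_alg_hom X \<rho> L \<longleftrightarrow>
            (\<exists>x\<in>topspace X. \<forall>f\<in>Brho X \<rho>. L f = f x)) \<and>
         (\<forall>x\<in>topspace X. \<forall>y\<in>topspace X.
            (\<forall>f\<in>Brho X \<rho>. L f = f x) \<and> (\<forall>f\<in>Brho X \<rho>. L f = f y) \<longrightarrow> x = y)"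
proof (intro conjI)
  show "smooth_alg_hom X \<rho> L \<longleftrightarrow> (\<exists>x\<in>topspace X. \<forall>f\<in>Brho X \<rho>. L f = f x)"
    using smooth_alg_hom_imp_point_evaluation[OF assms] point_evaluation_imp_smooth_alg_hom
    by metis
  show "\<forall>x\<in>topspace X. \<forall>y\<in>topspace X.
          (\<forall>f\<in>Brho X \<rho>. L f = f x) \<and> (\<forall>f\<in>Brho X \<rho>. L f = f y) \<longrightarrow> x = y"
    using point_evaluation_unique[OF assms(1)] by blast
qed

end
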